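(* Let $V:[0,+\infty)\to[0,+\infty)$ be a $C^1$ strictly increasing function with $\lim_{t\to\infty}V(t)=+\infty$, and let $S:=V'$. Let $(X,\mathsf d,\mathfrak m)$ be a metric measure space admitting the generalized asymptotic volume ratio $\mathrm{AVR}^V_{(X,\mathsf d,\mathfrak m)}$ associated to $V$, and suppose there is a constant $k>0$ such that $\mathfrak m(B_r(x))\le k\,V(r)$ for every $x\in X$ and every sufficiently large $r>0$. Let $(\rho_n)_{n\in\mathbb N}$ be functions on $\{(x,y)\in X\times X:x\neq y\}$ satisfying approximation of the identity of radial type associated to $V$. Let $p\ge1$. Then $(\rho_n)_{n\in\mathbb N}$ are non-negative, symmetric, measurable and satisfy the following conditions (A), (B), (C) with $L=\mathrm{AVR}^V_{(X,\mathsf d,\mathfrak m)}$: (A) for every $x\in X$, $\lim_{R\to+\infty}\limsup_{n\to\infty}\int_{B^c_R(x)}\rho_n(x,y)\,\mathrm d\mathfrak m(y)=\lim_{R\to+\infty}\liminf_{n\to\infty}\int_{B^c_R(x)}\rho_n(x,y)\,\mathrm d\mathfrak m(y)=L$, where $B^c_R(x)=\{y:\mathsf d(x,y)\ge R\}$; (B) for every $u\in L^p(X,\mathfrak m)$ with $\mathcal E_{n_0}(u)<+\infty$ for some $n_0\in\mathbb N$, where $\mathcal E_n(u):=\iint_{\{x\neq y\}}|u(x)-u(y)|^p\rho_n(x,y)\,\mathrm d\mathfrak m(x)\,\mathrm d\mathfrak m(y)$, one has $\lim_{n\to\infty}\iint_{\{0<\mathsf d(x,y)<R\}}|u(x)-u(y)|^p\rho_n(x,y)\,\mathrm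 d\mathfrak m(x)\,\mathrm d\mathfrak m(y)=0$ for all $R>0$; (C) for every sufficiently large $R>0$ there is $C=C(R)$ with $\int_{B^c_R(x)}\rho_n(x,y)\,\mathrm d\mathfrak m(y)\le C$ for all $x\in X$, $n\in\mathbb N$.
   Context: A metric measure space is a triple $(X,\mathsf d,\mathfrak m)$ with $(X,\mathsf d)$ complete and separable and $\mathfrak m$ a locally finite non-negative Borel measure with full support. $(X,\mathsf d,\mathfrak m)$ admits the generalized asymptotic volume ratio associated to $V$ if there is $\mathrm{AVR}^V_{(X,\mathsf d,\mathfrak m)}\in[0,+\infty]$ such that for every $x_0\in X$, $\mathrm{AVR}^V_{(X,\mathsf d,\mathfrak m)}=\lim_{r\to+\infty}\mathfrak m(B_r(x_0))/V(r)$. Functions $(\rho_n)$ satisfy approximation of the identity of radial type associated to $V$ if there is a sequence of strictly decreasing functions $\tilde\rho_n\in C^1(0,+\infty)$ such that: (i) $\lim_{n\to\infty}\tilde\rho_n(r)=0$ for all $r>0$; $\lim_{r\to+\infty}\tilde\rho_n(r)V(r)=0$ for all $n$; and $\rho_n(x,y)=\tilde\rho_n(\mathsf d(x,y))$ for all $x\neq y$; (ii) for all $n>m$, the map $r\mapsto\tilde\rho_n(r)/\tilde\rho_m(r)$ is non-decreasing on $(0,+\infty)$; (iii) $\lim_{R\to+\infty}\lim_{n\to\infty}\int_R^{+\infty}S(r)\tilde\rho_n(r)\,\mathrm dr=1$. *)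

theory Defs
  imports "HOL-Analysis.Analysis" "HOL-Probability.Probability"
begin

text \<open>Metric measure space: the metric space is the type (complete and separable,
  i.e. class polish_space); the measure is a Borel measure on the whole space,
  locally finite (each point has a ball of finite measure) with full support.\<close>
definition mms :: "('a::polish_space) measure \<Rightarrow> bool" where
  "mms m \<longleftrightarrow> sets m = sets borel \<and> space m = UNIV
     \<and> (\<forall>x. \<exists>r>0. emeasure m (ball x r) < \<infinity>)
     \<and> (\<forall>x r. r > 0 \<longrightarrow> emeasure m (ball x r) > 0)"

definition has_AVR :: "('a::metric_space) measure \<Rightarrow> (real \<Rightarrow> real) \<Rightarrow> ennreal \<Rightarrow> bool" where
  "has_AVR m V L \<longleftrightarrow>
     (\<forall>x0. ((\<lambda>r. emeasure m (ball x0 r) / ennreal (V r)) \<longlongrightarrow> L) at_top)"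

definition approx_id_radial ::
  "(real \<Rightarrow> real) \<Rightarrow> (real \<Rightarrow> real) \<Rightarrow> (nat \<Rightarrow> 'a::metric_space \<Rightarrow> 'a \<Rightarrow> real) \<Rightarrow> bool" where
  "approx_id_radial V S \<rho> \<longleftrightarrow>
    (\<exists>\<rho>t :: nat \<Rightarrow> real \<Rightarrow> real.
      (\<forall>n. \<rho>t n C1_differentiable_on {0<..} \<and> strict_antimono_on {0<..} (\<rho>t n))
      \<and> (\<forall>r>0. (\<lambda>n. \<rho>t n r) \<longlonglongrightarrow> 0)
      \<and> (\<forall>n. ((\<lambda>r. \<rho>t n r * V r) \<longlongrightarrow> 0) at_top)
      \<and> (\<forall>n x y. x \<noteq> y \<longrightarrow> \<rho> n x y = \<rho>t n (dist x y))
      \<and> (\<forall>n m. n > m \<longrightarrow> mono_on {0<..} (\<lambda>r. \<rho>t n r / \<rho>t m r))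
      \<and> (\<exists>f :: real \<Rightarrow> ennreal.
           (\<forall>\<^sub>F R in at_top.
              (\<lambda>n. \<integral>\<^sup>+ r\<in>{R..}. ennreal (S r * \<rho>t n r) \<partial>lborel) \<longlonglongrightarrow> f R)
           \<and> (f \<longlongrightarrow> 1) at_top))"

definition energy :: "'a measure \<Rightarrow> real \<Rightarrow> ('a \<Rightarrow> 'a \<Rightarrow> real) \<Rightarrow> ('a \<Rightarrow> real) \<Rightarrow> ennreal" where
  "energy m p r u = (\<integral>\<^sup>+ x. (\<integral>\<^sup>+ y. indicator {y. y \<noteq> x} y *
        ennreal (\<bar>u x - u y\<bar> powr p * r x y) \<partial>m) \<partial>m)"

end

theory Submission
  imports Defs
begin

(* Write rho_n(x, y) = g(d(x, y)) with g = rho~_n positive, decreasing and vanishing at infinity.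
   By Tonelli (the layer-cake formula)
     int_{d(x,y) >= R} g(d(x, y)) dm(y) = int_R^oo -g'(r) m{y. R <= d(x, y) < r} dr,
   so comparing m(B_r(x)) with c V(r) for r >= R and integrating by parts,
     int_R^oo -g' V = g(R) V(R) + int_R^oo S g,
   bounds the tail integral above by c (g(R) V(R) + int_R^oo S g), and below by the same
   quantity minus m(B_R(x)) g(R). As n -> oo the bracket tends to f(R), the inner limit in (iii),
   while g(R) -> 0. Taking for c the supremum resp. infimum of m(B_r(x))/V(r) over r >= R, which
   both tend to AVR as R -> oo, squeezes limsup and liminf in (A); taking c = k gives (C), the
   finitely many brackets before the limit being finite by the monotone ratios (ii).
   For (B), the ratios give rho_n <= (rho~_n(R) / rho~_n0(R)) rho_n0 on {d(x, y) < R}, and the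
   factor tends to 0.
*)

lemma antimono_on_imp_deriv_nonpos:
  fixes g :: "real \<Rightarrow> real"
  assumes "antimono_on A g" and "(g has_real_derivative D) (at x)" and "x \<in> interior A"
  shows "D \<le> 0"
proof -
  have "mono_on A (\<lambda>r. - g r)"
    using assms(1) by (auto simp: monotone_on_def)
  then have "- D \<ge> 0"
    using DERIV_minus[OF assms(2)] assms(3) by (rule mono_on_imp_deriv_nonneg)
  then show ?thesis by simp
qed

lemma tendsto_zero_if_mult_tendsto_zero:
  fixes g V :: "'b \<Rightarrow> real"
  assumes "((\<lambda>x. g x * V x) \<longlongrightarrow> 0) F" and "filterlim V at_top F"
  shows "(g \<longlongrightarrow> 0) F"
proof -
  have "((\<lambda>x. g x * V x * inverse (V x)) \<longlongrightarrow> 0 * 0) F"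
    using assms by (intro tendsto_mult tendsto_inverse_0_at_top)
  moreover have "\<forall>\<^sub>F x in F. g x * V x * inverse (V x) = g x"
    using assms(2) unfolding filterlim_at_top_dense
    by (rule allE[of _ 0]) (auto elim!: eventually_mono)
  ultimately show ?thesis by (simp add: tendsto_cong)
qed

lemma strict_antimono_on_pos_if_tendsto_zero:
  fixes g :: "real \<Rightarrow> real"
  assumes anti: "strict_antimono_on {a<..} g" and lim: "(g \<longlongrightarrow> 0) at_top" and r: "a < r"
  shows "0 < g r"
proof -
  have "\<forall>\<^sub>F s in at_top. g s \<le> g (r + 1)"
    using eventually_ge_at_top[of "r + 1"]
    by eventually_elim (use anti r in \<open>auto simp: monotone_on_def le_less\<close>)
  then have "0 \<le> g (r + 1)"
    using lim by (intro tendsto_upperbound) auto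
  also have "g (r + 1) < g r"
    using anti r by (auto simp: monotone_on_def)
  finally show ?thesis .
qed

lemma tendsto_SUP_atLeast_at_top:
  fixes h :: "'b::linorder \<Rightarrow> 'a::{complete_linorder, dense_linorder, linorder_topology}"
  assumes "(h \<longlongrightarrow> L) at_top"
  shows "((\<lambda>R. SUP r\<in>{R..}. h r) \<longlongrightarrow> L) at_top"
proof (rule order_tendstoI)
  fix a assume "a < L"
  then have "\<forall>\<^sub>F r in at_top. a < h r"
    using assms order_tendstoD(1) by blast
  then show "\<forall>\<^sub>F R in at_top. a < (SUP r\<in>{R..}. h r)"
    by eventually_elim (meson atLeast_iff less_SUP_iff order_refl)
next
  fix a assume "L < a"
  then obtain b where b: "L < b" "b < a"
    using dense by blast
  then have "\<forall>\<^sub>F r in at_top. h r < b"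
    using assms order_tendstoD(2) by blast
  then obtain N where N: "\<And>r. N \<le> r \<Longrightarrow> h r < b"
    by (auto simp: eventually_at_top_linorder)
  have "(SUP r\<in>{R..}. h r) < a" if "N \<le> R" for R
  proof -
    have "(SUP r\<in>{R..}. h r) \<le> b"
      using N that by (intro SUP_least) (auto intro: less_imp_le)
    then show ?thesis using b by simp
  qed
  then show "\<forall>\<^sub>F R in at_top. (SUP r\<in>{R..}. h r) < a"
    by (auto simp: eventually_at_top_linorder)
qed

lemma tendsto_INF_atLeast_at_top:
  fixes h :: "'b::linorder \<Rightarrow> 'a::{complete_linorder, dense_linorder, linorder_topology}"
  assumes "(h \<longlongrightarrow> L) at_top"
  shows "((\<lambda>R. INF r\<in>{R..}. h r) \<longlongrightarrow> L) at_top"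
proof (rule order_tendstoI)
  fix a assume "L < a"
  then have "\<forall>\<^sub>F r in at_top. h r < a"
    using assms order_tendstoD(2) by blast
  then show "\<forall>\<^sub>F R in at_top. (INF r\<in>{R..}. h r) < a"
    by eventually_elim (meson atLeast_iff INF_less_iff order_refl)
next
  fix a assume "a < L"
  then obtain b where b: "a < b" "b < L"
    using dense by blast
  then have "\<forall>\<^sub>F r in at_top. b < h r"
    using assms order_tendstoD(1) by blast
  then obtain N where N: "\<And>r. N \<le> r \<Longrightarrow> b < h r"
    by (auto simp: eventually_at_top_linorder)
  have "a < (INF r\<in>{R..}. h r)" if "N \<le> R" for R
  proof -
    have "b \<le> (INF r\<in>{R..}. h r)"
      using N that by (intro INF_greatest) (auto intro: less_imp_le)
    then show ?thesis using b by simp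
  qed
  then show "\<forall>\<^sub>F R in at_top. a < (INF r\<in>{R..}. h r)"
    by (auto simp: eventually_at_top_linorder)
qed

lemma limsup_liminf_tendsto_sandwich:
  fixes a :: "'b \<Rightarrow> nat \<Rightarrow> 'a::{complete_linorder, linorder_topology}"
  assumes bounds: "\<forall>\<^sub>F R in F. lo R \<le> liminf (a R) \<and> limsup (a R) \<le> hi R"
    and lo: "(lo \<longlongrightarrow> L) F" and hi: "(hi \<longlongrightarrow> L) F"
  shows "((\<lambda>R. limsup (a R)) \<longlongrightarrow> L) F \<and> ((\<lambda>R. liminf (a R)) \<longlongrightarrow> L) F"
proof -
  have "liminf (a R) \<le> limsup (a R)" for R
    by (rule Liminf_le_Limsup) simp
  then have "\<forall>\<^sub>F R in F. lo R \<le> liminf (a R) \<and> liminf (a R) \<le> limsup (a R) \<and> limsup (a R) \<le> hi R"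
    using bounds by auto
  then have "\<forall>\<^sub>F R in F. lo R \<le> limsup (a R) \<and> limsup (a R) \<le> hi R"
      and "\<forall>\<^sub>F R in F. lo R \<le> liminf (a R) \<and> liminf (a R) \<le> hi R"
    by (auto elim!: eventually_mono)
  then show ?thesis
    using lo hi by (auto intro: tendsto_sandwich elim: eventually_mono)
qed

lemma ennreal_seq_bounded_if_tendsto:
  fixes a :: "nat \<Rightarrow> ennreal"
  assumes fin: "\<And>n. a n < \<infinity>" and lim: "a \<longlonglongrightarrow> l" and "l < \<infinity>"
  shows "\<exists>B<\<infinity>. \<forall>n. a n \<le> B"
proof -
  obtain b where b: "l < b" "b < \<infinity>"
    using dense[OF \<open>l < \<infinity>\<close>] by blast
  then obtain N where N: "\<And>n. N \<le> n \<Longrightarrow> a n < b"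
    using order_tendstoD(2)[OF lim b(1)] by (auto simp: eventually_sequentially)
  have "a n \<le> (\<Sum>i<N. a i) + b" for n
  proof (cases "n < N")
    case True
    then have "a n \<le> (\<Sum>i<N. a i)" by (intro member_le_sum) auto
    then show ?thesis by (simp add: add_increasing2)
  next
    case False
    then show ?thesis using N[of n] by (simp add: add_increasing)
  qed
  moreover have "(\<Sum>i<N. a i) + b < \<infinity>"
    using b fin by (simp add: ennreal_sum_less_top less_top)
  ultimately show ?thesis by blast
qed

lemma nn_integral_triangle_swap:
  fixes a b :: "real \<Rightarrow> ennreal"
  assumes a: "(\<lambda>r. a r * indicator {R..} r) \<in> borel_measurable borel"
    and b: "(\<lambda>t. b t * indicator {R..} t) \<in> borel_measurable borel"
  shows "(\<integral>\<^sup>+r\<in>{R..}. a r * (\<integral>\<^sup>+t\<in>{R..r}. b t \<partial>lborel) \<partial>lborel)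
       = (\<integral>\<^sup>+t\<in>{R..}. b t * (\<integral>\<^sup>+r\<in>{t..}. a r \<partial>lborel) \<partial>lborel)"
proof -
  define a' where "a' = (\<lambda>r. a r * indicator {R..} r)"
  define b' where "b' = (\<lambda>t. b t * indicator {R..} t)"
  have [measurable]: "a' \<in> borel_measurable borel" "b' \<in> borel_measurable borel"
    unfolding a'_def b'_def by (fact a b)+
  define K where "K t r = (if t \<le> r then a' r * b' t else 0)" for t r
  have K_meas: "(\<lambda>(t, r). K t r) \<in> borel_measurable (lborel \<Otimes>\<^sub>M lborel)"
    unfolding K_def by measurable
  have "(\<integral>\<^sup>+t. K t r \<partial>lborel) = a r * (\<integral>\<^sup>+t\<in>{R..r}. b t \<partial>lborel) * indicator {R..} r" for r
  proof -
    have "(\<integral>\<^sup>+t. K t r \<partial>lborel) = (\<integral>\<^sup>+t. a' r * (b' t * indicator {..r} t) \<partial>lborel)"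
      by (intro nn_integral_cong) (simp add: K_def split: split_indicator)
    also have "\<dots> = a' r * (\<integral>\<^sup>+t. b' t * indicator {..r} t \<partial>lborel)"
      by (rule nn_integral_cmult) measurable
    also have "(\<integral>\<^sup>+t. b' t * indicator {..r} t \<partial>lborel) = (\<integral>\<^sup>+t\<in>{R..r}. b t \<partial>lborel)"
      by (intro nn_integral_cong) (simp add: b'_def split: split_indicator)
    finally show ?thesis by (simp add: a'_def mult_ac)
  qed
  moreover have "(\<integral>\<^sup>+r. K t r \<partial>lborel) = b t * (\<integral>\<^sup>+r\<in>{t..}. a r \<partial>lborel) * indicator {R..} t" for t
  proof -
    have "(\<integral>\<^sup>+r. K t r \<partial>lborel) = (\<integral>\<^sup>+r. b' t * (a' r * indicator {t..} r) \<partial>lborel)"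
      by (intro nn_integral_cong) (simp add: K_def mult.commute split: split_indicator)
    also have "\<dots> = b' t * (\<integral>\<^sup>+r. a' r * indicator {t..} r \<partial>lborel)"
      by (rule nn_integral_cmult) measurable
    also have "b' t * (\<integral>\<^sup>+r. a' r * indicator {t..} r \<partial>lborel)
        = b t * (\<integral>\<^sup>+r\<in>{t..}. a r \<partial>lborel) * indicator {R..} t"
    proof (cases "R \<le> t")
      case True
      then have "(\<integral>\<^sup>+r. a' r * indicator {t..} r \<partial>lborel) = (\<integral>\<^sup>+r\<in>{t..}. a r \<partial>lborel)"
        by (intro nn_integral_cong) (simp add: a'_def split: split_indicator)
      then show ?thesis using True by (simp add: b'_def)
    qed (simp add: b'_def)
    finally show ?thesis .
  qed
  ultimately show ?thesis
    using lborel_pair.Fubini'[OF K_meas] by simp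
qed

lemma borel_measurable_continuous_on_times_indicator:
  fixes \<phi> :: "real \<Rightarrow> real"
  assumes "continuous_on A \<phi>" "A \<in> sets borel" "B \<in> sets borel" "B \<subseteq> A"
  shows "(\<lambda>r. ennreal (\<phi> r) * indicator B r) \<in> borel_measurable borel"
proof -
  have [measurable]: "(\<lambda>r. indicator A r *\<^sub>R \<phi> r) \<in> borel_measurable borel"
    using assms(1,2) by (rule borel_measurable_continuous_on_indicator[rotated])
  have "(\<lambda>r. ennreal (indicator A r *\<^sub>R \<phi> r) * indicator B r) \<in> borel_measurable borel"
    using assms(3) by measurable
  then show ?thesis
    by (rule measurable_cong[THEN iffD1, rotated]) (use assms(4) in \<open>auto split: split_indicator\<close>)
qed

lemma borel_measurable_emeasure_annulus:
  fixes m :: "'a::{metric_space, second_countable_topology} measure"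
  assumes sets_m: "sets m = sets borel" and "sigma_finite_measure m"
  shows "(\<lambda>r. emeasure m {y. R \<le> dist x y \<and> dist x y < r}) \<in> borel_measurable borel"
proof -
  have "(\<lambda>(r, y). indicator {y. R \<le> dist x y \<and> dist x y < r} y :: ennreal)
      \<in> borel_measurable (borel \<Otimes>\<^sub>M borel)"
    by measurable
  then have "(\<lambda>r. \<integral>\<^sup>+y. indicator {y. R \<le> dist x y \<and> dist x y < r} y \<partial>m) \<in> borel_measurable borel"
    by (intro sigma_finite_measure.borel_measurable_nn_integral[OF assms(2)])
      (simp add: measurable_cong_sets[OF sets_pair_measure_cong[OF refl sets_m] refl])
  moreover have "{y. R \<le> dist x y \<and> dist x y < r} \<in> sets m" for r
    unfolding sets_m by measurable
  ultimately show ?thesis by simp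
qed

lemma sigma_finite_measure_if_balls_finite:
  fixes m :: "'a::metric_space measure"
  assumes sets_m: "sets m = sets borel" and fin: "\<And>r. R \<le> r \<Longrightarrow> emeasure m (ball x r) < \<infinity>"
  shows "sigma_finite_measure m"
proof -
  let ?A = "range (\<lambda>i::nat. ball x (R + real i))"
  have "\<Union> ?A = space m"
  proof -
    have "\<exists>i::nat. y \<in> ball x (R + real i)" for y
    proof -
      obtain i :: nat where "dist x y - R < real i"
        using reals_Archimedean2 by blast
      then show ?thesis by (intro exI[of _ i]) simp
    qed
    then show ?thesis using sets_eq_imp_space_eq[OF sets_m] by auto
  qed
  moreover have "emeasure m (ball x (R + real i)) \<noteq> \<infinity>" for i
    using fin[of "R + real i"] by simp
  moreover have "?A \<subseteq> sets m"
    by (auto simp: sets_m)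
  ultimately show ?thesis
    unfolding sigma_finite_measure_def by (intro exI[of _ ?A]) auto
qed

section \<open>Decreasing radial profiles\<close>

locale decreasing_profile =
  fixes g D :: "real \<Rightarrow> real"
  assumes g_deriv: "\<And>r. 0 < r \<Longrightarrow> (g has_real_derivative D r) (at r)"
    and D_cont: "continuous_on {0<..} D"
    and D_nonpos: "\<And>r. 0 < r \<Longrightarrow> D r \<le> 0"
    and g_tendsto_zero: "(g \<longlongrightarrow> 0) at_top"
begin

lemma g_nonneg:
  assumes "0 < r"
  shows "0 \<le> g r"
proof -
  have "\<forall>\<^sub>F s in at_top. g s \<le> g r"
    using eventually_ge_at_top[of r]
  proof eventually_elim
    case (elim s)
    show ?case
      by (rule deriv_nonpos_imp_antimono[OF g_deriv D_nonpos elim]) (use assms in auto)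
  qed
  then show ?thesis
    using g_tendsto_zero by (intro tendsto_upperbound) auto
qed

lemma g_cont: "continuous_on {0<..} g"
  using g_deriv by (intro continuous_at_imp_continuous_on) (auto intro: DERIV_isCont)

lemma borel_measurable_neg_D:
  "0 < R \<Longrightarrow> (\<lambda>r. ennreal (- D r) * indicator {R..} r) \<in> borel_measurable borel"
  by (rule borel_measurable_continuous_on_times_indicator[where A = "{0<..}"])
    (auto intro: continuous_on_minus D_cont)

lemma borel_measurable_neg_D_times:
  assumes R: "0 < R" and "continuous_on {0<..} \<phi>" and \<phi>: "\<And>r. R \<le> r \<Longrightarrow> 0 \<le> \<phi> r"
  shows "(\<lambda>r. ennreal (- D r) * ennreal (\<phi> r) * indicator {R..} r) \<in> borel_measurable borel"
proof -
  have "(\<lambda>r. ennreal (- D r * \<phi> r) * indicator {R..} r) \<in> borel_measurable borel"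
    by (rule borel_measurable_continuous_on_times_indicator[where A = "{0<..}"])
      (use R assms(2) in \<open>auto intro!: continuous_intros D_cont\<close>)
  moreover have "(\<lambda>r. ennreal (- D r) * ennreal (\<phi> r) * indicator {R..} r)
      = (\<lambda>r. ennreal (- D r * \<phi> r) * indicator {R..} r)"
  proof
    fix r
    show "ennreal (- D r) * ennreal (\<phi> r) * indicator {R..} r = ennreal (- D r * \<phi> r) * indicator {R..} r"
      using R D_nonpos[of r] \<phi>[of r] by (cases "R \<le> r") (auto simp: ennreal_mult[symmetric])
  qed
  ultimately show ?thesis by simp
qed

lemma nn_integral_neg_D:
  assumes R: "0 < R"
  shows "(\<integral>\<^sup>+r\<in>{R..}. ennreal (- D r) \<partial>lborel) = ennreal (g R)"
proof -
  define f where "f r = - (indicator {0<..} r *\<^sub>R D r)" for r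
  have "f \<in> borel_measurable borel"
    unfolding f_def
    by (intro borel_measurable_uminus borel_measurable_continuous_on_indicator D_cont) auto
  then have "(\<integral>\<^sup>+r\<in>{R..}. ennreal (f r) \<partial>lborel) = ennreal (0 - (- g R))"
  proof (rule nn_integral_FTC_atLeast)
    fix r assume "R \<le> r"
    then have "0 < r" using R by simp
    then show "((\<lambda>r. - g r) has_real_derivative f r) (at r)" "0 \<le> f r"
      using g_deriv[of r] D_nonpos[of r] by (auto simp: f_def intro: derivative_eq_intros)
  qed (use tendsto_minus[OF g_tendsto_zero] in simp)
  also have "(\<integral>\<^sup>+r\<in>{R..}. ennreal (f r) \<partial>lborel) = (\<integral>\<^sup>+r\<in>{R..}. ennreal (- D r) \<partial>lborel)"
    using R by (intro nn_integral_cong) (auto simp: f_def split: split_indicator)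
  finally show ?thesis by simp
qed

lemma nn_integral_greaterThan_neg_D:
  assumes "0 < s"
  shows "(\<integral>\<^sup>+r\<in>{s<..}. ennreal (- D r) \<partial>lborel) = ennreal (g s)"
proof -
  have "(\<integral>\<^sup>+r\<in>{s<..}. ennreal (- D r) \<partial>lborel) = (\<integral>\<^sup>+r\<in>{s..}. ennreal (- D r) \<partial>lborel)"
    using AE_lborel_singleton[of s]
    by (intro nn_integral_cong_AE) (auto elim!: eventually_mono split: split_indicator)
  then show ?thesis
    using nn_integral_neg_D[OF assms] by simp
qed

lemma tail_integral_layer_cake:
  fixes m :: "'a::{metric_space, second_countable_topology} measure"
  assumes sets_m: "sets m = sets borel" and "sigma_finite_measure m" and R: "0 < R"
  shows "(\<integral>\<^sup>+y\<in>{y. R \<le> dist x y}. ennreal (g (dist x y)) \<partial>m)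
       = (\<integral>\<^sup>+r\<in>{R..}. ennreal (- D r) * emeasure m {y. R \<le> dist x y \<and> dist x y < r} \<partial>lborel)"
proof -
  interpret pair_sigma_finite lborel m
    by (intro pair_sigma_finite.intro lborel.sigma_finite_measure_axioms assms(2))
  define Dn where "Dn r = - (indicator {0<..} r *\<^sub>R D r)" for r
  have [measurable]: "Dn \<in> borel_measurable borel"
    unfolding Dn_def
    by (intro borel_measurable_uminus borel_measurable_continuous_on_indicator D_cont) auto
  define K where "K r y = ennreal (Dn r) * indicator {y. R \<le> dist x y \<and> dist x y < r} y" for r y
  have "(\<lambda>(r, y). K r y) \<in> borel_measurable (lborel \<Otimes>\<^sub>M borel)"
    unfolding K_def by measurable
  then have K_meas: "(\<lambda>(r, y). K r y) \<in> borel_measurable (lborel \<Otimes>\<^sub>M m)"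
    by (simp add: measurable_cong_sets[OF sets_pair_measure_cong[OF refl sets_m] refl])
  have "(\<integral>\<^sup>+r. K r y \<partial>lborel) = ennreal (g (dist x y)) * indicator {y. R \<le> dist x y} y" for y
  proof (cases "R \<le> dist x y")
    case True
    then have "(\<integral>\<^sup>+r. K r y \<partial>lborel) = (\<integral>\<^sup>+r\<in>{dist x y<..}. ennreal (- D r) \<partial>lborel)"
      using R by (intro nn_integral_cong) (auto simp: K_def Dn_def split: split_indicator)
    then show ?thesis
      using True by (simp add: nn_integral_greaterThan_neg_D[OF less_le_trans[OF R True]])
  qed (simp add: K_def)
  moreover have "(\<integral>\<^sup>+y. K r y \<partial>m)
      = ennreal (- D r) * emeasure m {y. R \<le> dist x y \<and> dist x y < r} * indicator {R..} r" for r
  proof (cases "R \<le> r")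
    case True
    have "{y. R \<le> dist x y \<and> dist x y < r} \<in> sets m"
      unfolding sets_m by measurable
    then show ?thesis
      using True R by (simp add: K_def Dn_def nn_integral_cmult_indicator)
  next
    case False
    then have "K r y = 0" for y by (auto simp: K_def)
    then show ?thesis using False by simp
  qed
  ultimately show ?thesis
    using Fubini'[OF K_meas] by simp
qed

end

lemma decreasing_profileI:
  fixes g :: "real \<Rightarrow> real"
  assumes C1: "g C1_differentiable_on {0<..}" and anti: "strict_antimono_on {0<..} g"
    and lim: "(g \<longlongrightarrow> 0) at_top"
  shows "\<exists>D. decreasing_profile g D"
proof -
  obtain D where D: "\<And>r. 0 < r \<Longrightarrow> (g has_real_derivative D r) (at r)"
    and D_cont: "continuous_on {0<..} D"
    using C1 by (auto simp: C1_differentiable_on_def has_real_derivative_iff_has_vector_derivative)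
  have "antimono_on {0<..} g"
    using anti strict_antimono_iff_antimono by blast
  then have "D r \<le> 0" if "0 < r" for r
    using D[OF that] by (rule antimono_on_imp_deriv_nonpos) (use that in \<open>simp add: interior_open\<close>)
  then show ?thesis
    using D D_cont lim by (intro exI[of _ D] decreasing_profile.intro) auto
qed

locale volume_function =
  fixes V S :: "real \<Rightarrow> real"
  assumes V_deriv: "\<And>r. 0 < r \<Longrightarrow> (V has_real_derivative S r) (at r)"
    and S_cont: "continuous_on {0<..} S"
    and V_mono: "mono_on {0<..} V"
    and V_pos: "\<And>r. 0 < r \<Longrightarrow> 0 < V r"
begin

lemma S_nonneg: "0 < r \<Longrightarrow> 0 \<le> S r"
  by (rule mono_on_imp_deriv_nonneg[OF V_mono V_deriv]) (simp_all add: interior_open)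

lemma V_cont: "continuous_on {0<..} V"
  using V_deriv by (intro continuous_at_imp_continuous_on) (auto intro: DERIV_isCont)

lemma nn_integral_S_Icc:
  assumes R: "0 < R" and "R \<le> r"
  shows "(\<integral>\<^sup>+t\<in>{R..r}. ennreal (S t) \<partial>lborel) = ennreal (V r - V R)"
proof -
  define f where "f t = indicator {0<..} t *\<^sub>R S t" for t
  have "f \<in> borel_measurable borel"
    unfolding f_def by (intro borel_measurable_continuous_on_indicator S_cont) auto
  then have "(\<integral>\<^sup>+t\<in>{R..r}. ennreal (f t) \<partial>lborel) = ennreal (V r - V R)"
  proof (rule nn_integral_FTC_Icc)
    fix t assume "t \<in> {R..r}"
    then have "0 < t" using R by auto
    then show "(V has_real_derivative f t) (at t)" "0 \<le> f t"
      using V_deriv[of t] S_nonneg[of t] by (auto simp: f_def)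
  qed fact
  moreover have "(\<integral>\<^sup>+t\<in>{R..r}. ennreal (f t) \<partial>lborel) = (\<integral>\<^sup>+t\<in>{R..r}. ennreal (S t) \<partial>lborel)"
    using R by (intro nn_integral_cong) (auto simp: f_def split: split_indicator)
  ultimately show ?thesis by simp
qed

end

lemma volume_functionI:
  fixes V S :: "real \<Rightarrow> real"
  assumes V_nonneg: "\<forall>t\<ge>0. V t \<ge> 0"
    and V_deriv: "\<forall>t\<ge>0. (V has_real_derivative S t) (at t within {0..})"
    and S_cont: "continuous_on {0..} S"
    and V_strict: "strict_mono_on {0..} V"
  shows "volume_function V S"
proof
  fix r :: real
  assume r: "0 < r"
  have "at r within {0..} = at r"
    using r by (intro at_within_interior) simp
  then show "(V has_real_derivative S r) (at r)"
    using V_deriv r by (metis less_imp_le)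
  have "V 0 < V r"
    using V_strict r by (auto simp: monotone_on_def)
  then show "0 < V r"
    using V_nonneg by (metis order_le_less_trans order_refl)
next
  show "continuous_on {0<..} S"
    using S_cont by (rule continuous_on_subset) auto
  show "mono_on {0<..} V"
    using strict_mono_on_imp_mono_on[OF V_strict] by (rule mono_on_subset) auto
qed

locale profile_volume = decreasing_profile g D + volume_function V S
  for g D V S :: "real \<Rightarrow> real"
begin

lemma borel_measurable_neg_D_times_V:
  "0 < R \<Longrightarrow> (\<lambda>r. ennreal (- D r) * ennreal (V r) * indicator {R..} r) \<in> borel_measurable borel"
  using V_pos by (intro borel_measurable_neg_D_times V_cont) (auto intro: less_imp_le)

lemma nn_integral_neg_D_times_V:
  assumes R: "0 < R"
  shows "(\<integral>\<^sup>+r\<in>{R..}. ennreal (- D r) * ennreal (V r) \<partial>lborel)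
       = ennreal (g R * V R) + (\<integral>\<^sup>+t\<in>{R..}. ennreal (S t * g t) \<partial>lborel)"
proof -
  have V_split: "ennreal (- D r) * ennreal (V r)
      = ennreal (- D r) * ennreal (V R) + ennreal (- D r) * ennreal (V r - V R)" if "R \<le> r" for r
    using that R mono_onD[OF V_mono, of R r] V_pos[OF R]
    by (simp add: distrib_left[symmetric] ennreal_plus[symmetric])
  have "(\<integral>\<^sup>+r\<in>{R..}. ennreal (- D r) * ennreal (V r) \<partial>lborel)
      = (\<integral>\<^sup>+r. ennreal (- D r) * indicator {R..} r * ennreal (V R)
          + ennreal (- D r) * ennreal (V r - V R) * indicator {R..} r \<partial>lborel)"
  proof (intro nn_integral_cong)
    fix r
    show "ennreal (- D r) * ennreal (V r) * indicator {R..} r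
        = ennreal (- D r) * indicator {R..} r * ennreal (V R)
          + ennreal (- D r) * ennreal (V r - V R) * indicator {R..} r"
      by (cases "R \<le> r") (simp_all add: V_split)
  qed
  also have "\<dots> = (\<integral>\<^sup>+r\<in>{R..}. ennreal (- D r) \<partial>lborel) * ennreal (V R)
      + (\<integral>\<^sup>+r\<in>{R..}. ennreal (- D r) * ennreal (V r - V R) \<partial>lborel)"
  proof (subst nn_integral_add)
    show "(\<lambda>r. ennreal (- D r) * ennreal (V r - V R) * indicator {R..} r) \<in> borel_measurable lborel"
      using R mono_onD[OF V_mono, of R] unfolding measurable_lborel2
      by (intro borel_measurable_neg_D_times continuous_intros V_cont) auto
  qed (use borel_measurable_neg_D[OF R] in \<open>simp_all add: nn_integral_multc\<close>)
  also have "(\<integral>\<^sup>+r\<in>{R..}. ennreal (- D r) * ennreal (V r - V R) \<partial>lborel)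
      = (\<integral>\<^sup>+r\<in>{R..}. ennreal (- D r) * (\<integral>\<^sup>+t\<in>{R..r}. ennreal (S t) \<partial>lborel) \<partial>lborel)"
    using R by (intro nn_integral_cong) (simp add: nn_integral_S_Icc split: split_indicator)
  also have "\<dots> = (\<integral>\<^sup>+t\<in>{R..}. ennreal (S t) * (\<integral>\<^sup>+r\<in>{t..}. ennreal (- D r) \<partial>lborel) \<partial>lborel)"
    using borel_measurable_neg_D[OF R] R
    by (intro nn_integral_triangle_swap borel_measurable_continuous_on_times_indicator[OF S_cont]) auto
  also have "\<dots> = (\<integral>\<^sup>+t\<in>{R..}. ennreal (S t * g t) \<partial>lborel)"
    using R by (intro nn_integral_cong)
      (auto simp: nn_integral_neg_D S_nonneg g_nonneg ennreal_mult split: split_indicator)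
  finally show ?thesis
    using nn_integral_neg_D[OF R] g_nonneg[OF R] V_pos[OF R] by (simp add: ennreal_mult)
qed

lemma tail_integral_le:
  fixes m :: "'a::{metric_space, second_countable_topology} measure"
  assumes sets_m: "sets m = sets borel" and sf: "sigma_finite_measure m" and R: "0 < R"
    and growth: "\<And>r. R \<le> r \<Longrightarrow> emeasure m (ball x r) \<le> c * ennreal (V r)"
  shows "(\<integral>\<^sup>+y\<in>{y. R \<le> dist x y}. ennreal (g (dist x y)) \<partial>m)
       \<le> c * (ennreal (g R * V R) + (\<integral>\<^sup>+r\<in>{R..}. ennreal (S r * g r) \<partial>lborel))"
proof -
  have "(\<integral>\<^sup>+y\<in>{y. R \<le> dist x y}. ennreal (g (dist x y)) \<partial>m)
      = (\<integral>\<^sup>+r\<in>{R..}. ennreal (- D r) * emeasure m {y. R \<le> dist x y \<and> dist x y < r} \<partial>lborel)"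
    using sets_m sf R by (rule tail_integral_layer_cake)
  also have "\<dots> \<le> (\<integral>\<^sup>+r. c * (ennreal (- D r) * ennreal (V r) * indicator {R..} r) \<partial>lborel)"
  proof (intro nn_integral_mono)
    fix r :: real
    show "ennreal (- D r) * emeasure m {y. R \<le> dist x y \<and> dist x y < r} * indicator {R..} r
        \<le> c * (ennreal (- D r) * ennreal (V r) * indicator {R..} r)"
    proof (cases "R \<le> r")
      case True
      have "emeasure m {y. R \<le> dist x y \<and> dist x y < r} \<le> emeasure m (ball x r)"
        by (rule emeasure_mono) (auto simp: sets_m)
      also have "\<dots> \<le> c * ennreal (V r)"
        using growth True .
      finally have "ennreal (- D r) * emeasure m {y. R \<le> dist x y \<and> dist x y < r}
          \<le> ennreal (- D r) * (c * ennreal (V r))"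
        by (rule mult_left_mono) simp
      then show ?thesis using True by (simp add: mult_ac)
    qed simp
  qed
  also have "\<dots> = c * (\<integral>\<^sup>+r\<in>{R..}. ennreal (- D r) * ennreal (V r) \<partial>lborel)"
    using borel_measurable_neg_D_times_V[OF R] by (intro nn_integral_cmult) simp
  also have "\<dots> = c * (ennreal (g R * V R) + (\<integral>\<^sup>+r\<in>{R..}. ennreal (S r * g r) \<partial>lborel))"
    by (simp only: nn_integral_neg_D_times_V[OF R])
  finally show ?thesis .
qed

lemma tail_integral_ge:
  fixes m :: "'a::{metric_space, second_countable_topology} measure"
  assumes sets_m: "sets m = sets borel" and sf: "sigma_finite_measure m" and R: "0 < R"
    and growth: "\<And>r. R \<le> r \<Longrightarrow> c * ennreal (V r) \<le> emeasure m (ball x r)"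
  shows "c * (ennreal (g R * V R) + (\<integral>\<^sup>+r\<in>{R..}. ennreal (S r * g r) \<partial>lborel))
       \<le> (\<integral>\<^sup>+y\<in>{y. R \<le> dist x y}. ennreal (g (dist x y)) \<partial>m) + emeasure m (ball x R) * ennreal (g R)"
proof -
  let ?F = "\<lambda>r. emeasure m {y. R \<le> dist x y \<and> dist x y < r}"
  let ?G = "emeasure m (ball x R)"
  have "c * (ennreal (g R * V R) + (\<integral>\<^sup>+r\<in>{R..}. ennreal (S r * g r) \<partial>lborel))
      = c * (\<integral>\<^sup>+r\<in>{R..}. ennreal (- D r) * ennreal (V r) \<partial>lborel)"
    by (simp only: nn_integral_neg_D_times_V[OF R])
  also have "\<dots> = (\<integral>\<^sup>+r. c * (ennreal (- D r) * ennreal (V r) * indicator {R..} r) \<partial>lborel)"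
    using borel_measurable_neg_D_times_V[OF R] by (intro nn_integral_cmult[symmetric]) simp
  also have "\<dots> \<le> (\<integral>\<^sup>+r. ennreal (- D r) * indicator {R..} r * ?F r
      + ennreal (- D r) * indicator {R..} r * ?G \<partial>lborel)"
  proof (intro nn_integral_mono)
    fix r :: real
    show "c * (ennreal (- D r) * ennreal (V r) * indicator {R..} r)
        \<le> ennreal (- D r) * indicator {R..} r * ?F r + ennreal (- D r) * indicator {R..} r * ?G"
    proof (cases "R \<le> r")
      case True
      have "c * ennreal (V r) \<le> emeasure m (ball x r)"
        using growth True .
      also have "\<dots> \<le> emeasure m ({y. R \<le> dist x y \<and> dist x y < r} \<union> ball x R)"
        by (rule emeasure_mono) (auto simp: sets_m)
      also have "\<dots> \<le> ?F r + ?G"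
        by (rule emeasure_subadditive) (simp_all add: sets_m)
      finally have "ennreal (- D r) * (c * ennreal (V r)) \<le> ennreal (- D r) * (?F r + ?G)"
        by (rule mult_left_mono) simp
      then show ?thesis using True by (simp add: mult_ac distrib_left)
    qed simp
  qed
  also have "\<dots> = (\<integral>\<^sup>+r. ennreal (- D r) * indicator {R..} r * ?F r \<partial>lborel)
      + (\<integral>\<^sup>+r. ennreal (- D r) * indicator {R..} r * ?G \<partial>lborel)"
    using borel_measurable_neg_D[OF R] borel_measurable_emeasure_annulus[OF sets_m sf]
    by (intro nn_integral_add) (simp_all add: borel_measurable_times_ennreal)
  also have "(\<integral>\<^sup>+r. ennreal (- D r) * indicator {R..} r * ?G \<partial>lborel) = ?G * ennreal (g R)"
    using borel_measurable_neg_D[OF R] nn_integral_neg_D[OF R]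
    by (subst nn_integral_multc) (simp_all add: mult.commute)
  also have "(\<integral>\<^sup>+r. ennreal (- D r) * indicator {R..} r * ?F r \<partial>lborel)
      = (\<integral>\<^sup>+y\<in>{y. R \<le> dist x y}. ennreal (g (dist x y)) \<partial>m)"
    unfolding tail_integral_layer_cake[OF sets_m sf R] by (simp add: mult_ac)
  finally show ?thesis .
qed

end

section \<open>Radial approximations of the identity\<close>

text \<open>\<open>\<rho>t n\<close> is the radial profile (the paper's \<open>\<rho>\<^sub>n\<close> with a tilde), \<open>D n\<close> its derivative,
  and \<open>f R\<close> the inner limit in (iii).\<close>
locale radial_approx_identity = volume_function +
  fixes \<rho> :: "nat \<Rightarrow> 'a::polish_space \<Rightarrow> 'a \<Rightarrow> real"
    and \<rho>t D :: "nat \<Rightarrow> real \<Rightarrow> real"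
    and f :: "real \<Rightarrow> ennreal"
  assumes profile: "decreasing_profile (\<rho>t n) (D n)"
    and profile_pos: "0 < r \<Longrightarrow> 0 < \<rho>t n r"
    and profile_tendsto_zero: "0 < r \<Longrightarrow> (\<lambda>n. \<rho>t n r) \<longlonglongrightarrow> 0"
    and kernel_eq: "x \<noteq> y \<Longrightarrow> \<rho> n x y = \<rho>t n (dist x y)"
    and profile_ratio_mono: "k < n \<Longrightarrow> mono_on {0<..} (\<lambda>r. \<rho>t n r / \<rho>t k r)"
    and S_integral_tendsto:
      "\<forall>\<^sub>F R in at_top. (\<lambda>n. \<integral>\<^sup>+r\<in>{R..}. ennreal (S r * \<rho>t n r) \<partial>lborel) \<longlonglongrightarrow> f R"
    and f_tendsto: "(f \<longlongrightarrow> 1) at_top"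
begin

lemma kernel_profile_volume: "profile_volume (\<rho>t n) (D n) V S"
  by (intro profile_volume.intro profile volume_function_axioms)

lemma kernel_nonneg: "x \<noteq> y \<Longrightarrow> 0 \<le> \<rho> n x y"
  using profile_pos[of "dist x y" n] by (simp add: kernel_eq)

lemma kernel_symmetric: "x \<noteq> y \<Longrightarrow> \<rho> n x y = \<rho> n y x"
  by (simp add: kernel_eq dist_commute)

text \<open>\<open>\<rho>\<close> is arbitrary on the diagonal; the zero extension of the profile yields a version of
  the kernel that is defined and measurable everywhere.\<close>
definition ext_profile :: "nat \<Rightarrow> real \<Rightarrow> real" where
  "ext_profile n r = indicator {0<..} r *\<^sub>R \<rho>t n r"

lemma borel_measurable_ext_profile [measurable]: "ext_profile n \<in> borel_measurable borel"
  unfolding ext_profile_def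
  by (intro borel_measurable_continuous_on_indicator decreasing_profile.g_cont[OF profile]) auto

lemma ext_profile_nonneg: "0 \<le> ext_profile n r"
  by (cases "0 < r") (auto simp: ext_profile_def intro: less_imp_le profile_pos)

lemma kernel_eq_ext_profile: "x \<noteq> y \<Longrightarrow> \<rho> n x y = ext_profile n (dist x y)"
  by (simp add: kernel_eq ext_profile_def)

lemma kernel_measurable:
  fixes m :: "'a measure"
  assumes "sets m = sets borel"
  shows "(\<lambda>(x, y). if x \<noteq> y then \<rho> n x y else 0) \<in> borel_measurable (m \<Otimes>\<^sub>M m)"
proof -
  have "(\<lambda>(x, y). ext_profile n (dist x y)) \<in> borel_measurable (borel \<Otimes>\<^sub>M borel :: ('a \<times> 'a) measure)"
    by measurable
  moreover have "(\<lambda>(x, y). if x \<noteq> y then \<rho> n x y else 0) = (\<lambda>(x, y). ext_profile n (dist x y))"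
    by (auto simp: kernel_eq_ext_profile ext_profile_def)
  ultimately show ?thesis
    by (simp add: measurable_cong_sets[OF sets_pair_measure_cong[OF assms assms] refl])
qed

lemma profile_le_ratio_below:
  assumes "k < n" "0 < r" "r \<le> R"
  shows "\<rho>t n r \<le> \<rho>t n R / \<rho>t k R * \<rho>t k r"
proof -
  have "\<rho>t n r / \<rho>t k r \<le> \<rho>t n R / \<rho>t k R"
    using mono_onD[OF profile_ratio_mono[OF assms(1)]] assms by auto
  then show ?thesis
    using profile_pos[of r k] assms(2) by (simp add: divide_le_eq)
qed

lemma profile_le_ratio_above:
  assumes "k < n" "0 < R" "R \<le> r"
  shows "\<rho>t k r \<le> \<rho>t k R / \<rho>t n R * \<rho>t n r"
proof -
  have "\<rho>t n R / \<rho>t k R \<le> \<rho>t n r / \<rho>t k r"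
    using mono_onD[OF profile_ratio_mono[OF assms(1)]] assms by auto
  then show ?thesis
    using profile_pos[of R k] profile_pos[of r k] profile_pos[of R n] assms
    by (simp add: field_simps)
qed

lemma kernel_le_ratio_ext_profile:
  assumes "n0 < n" "0 < dist x y" "dist x y \<le> R"
  shows "\<rho> n x y \<le> \<rho>t n R / \<rho>t n0 R * ext_profile n0 (dist x y)"
  using profile_le_ratio_below[OF assms] assms by (simp add: kernel_eq ext_profile_def)

lemma local_energy_le_energy:
  fixes m :: "'a measure" and u :: "'a \<Rightarrow> real"
  assumes sets_m: "sets m = sets borel" and sf: "sigma_finite_measure m"
    and u: "u \<in> borel_measurable m" and n: "n0 < n" and R: "0 < R"
  shows "(\<integral>\<^sup>+x. (\<integral>\<^sup>+y\<in>{y. 0 < dist x y \<and> dist x y < R}.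
           ennreal (\<bar>u x - u y\<bar> powr p * \<rho> n x y) \<partial>m) \<partial>m)
       \<le> ennreal (\<rho>t n R / \<rho>t n0 R) * energy m p (\<rho> n0) u"
proof -
  define c where "c = \<rho>t n R / \<rho>t n0 R"
  define Q where "Q x y = ennreal (\<bar>u x - u y\<bar> powr p * ext_profile n0 (dist x y))" for x y
  have [measurable]: "u \<in> borel_measurable borel"
    using u by (simp add: measurable_cong_sets[OF sets_m refl])
  have "(\<lambda>(x, y). Q x y) \<in> borel_measurable (borel \<Otimes>\<^sub>M borel)"
    unfolding Q_def by measurable
  then have Q_meas: "(\<lambda>(x, y). Q x y) \<in> borel_measurable (m \<Otimes>\<^sub>M m)"
    by (simp add: measurable_cong_sets[OF sets_pair_measure_cong[OF sets_m sets_m] refl])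
  have energy_eq: "energy m p (\<rho> n0) u = (\<integral>\<^sup>+x. (\<integral>\<^sup>+y. Q x y \<partial>m) \<partial>m)"
    unfolding energy_def Q_def
    by (intro nn_integral_cong) (auto simp: kernel_eq_ext_profile ext_profile_def split: split_indicator)
  have "(\<integral>\<^sup>+x. (\<integral>\<^sup>+y\<in>{y. 0 < dist x y \<and> dist x y < R}.
        ennreal (\<bar>u x - u y\<bar> powr p * \<rho> n x y) \<partial>m) \<partial>m)
      \<le> (\<integral>\<^sup>+x. (\<integral>\<^sup>+y. ennreal c * Q x y \<partial>m) \<partial>m)"
  proof (intro nn_integral_mono)
    fix x y
    show "ennreal (\<bar>u x - u y\<bar> powr p * \<rho> n x y) * indicator {y. 0 < dist x y \<and> dist x y < R} y
        \<le> ennreal c * Q x y"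
    proof (cases "0 < dist x y \<and> dist x y < R")
      case True
      then have "\<bar>u x - u y\<bar> powr p * \<rho> n x y
          \<le> \<bar>u x - u y\<bar> powr p * (c * ext_profile n0 (dist x y))"
        using kernel_le_ratio_ext_profile[OF n, of x y R] by (intro mult_left_mono) (simp_all add: c_def)
      then have "\<bar>u x - u y\<bar> powr p * \<rho> n x y
          \<le> c * (\<bar>u x - u y\<bar> powr p * ext_profile n0 (dist x y))"
        by (simp add: mult_ac)
      moreover have "0 \<le> c" "0 \<le> \<bar>u x - u y\<bar> powr p * ext_profile n0 (dist x y)"
        using profile_pos[OF R] by (simp_all add: c_def ext_profile_nonneg less_imp_le)
      ultimately show ?thesis
        using True by (simp add: Q_def ennreal_mult[symmetric] ennreal_leI)
    qed simp
  qed
  also have "\<dots> = (\<integral>\<^sup>+x. ennreal c * (\<integral>\<^sup>+y. Q x y \<partial>m) \<partial>m)"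
    using measurable_Pair2[OF Q_meas] by (intro nn_integral_cong nn_integral_cmult) simp
  also have "\<dots> = ennreal c * energy m p (\<rho> n0) u"
    unfolding energy_eq using sigma_finite_measure.borel_measurable_nn_integral[OF sf Q_meas]
    by (rule nn_integral_cmult)
  finally show ?thesis unfolding c_def .
qed

lemma local_energy_tendsto_zero:
  fixes m :: "'a measure" and u :: "'a \<Rightarrow> real"
  assumes sets_m: "sets m = sets borel" and sf: "sigma_finite_measure m"
    and u: "u \<in> borel_measurable m" and E: "energy m p (\<rho> n0) u < \<infinity>" and R: "0 < R"
  shows "(\<lambda>n. \<integral>\<^sup>+x. (\<integral>\<^sup>+y\<in>{y. 0 < dist x y \<and> dist x y < R}.
           ennreal (\<bar>u x - u y\<bar> powr p * \<rho> n x y) \<partial>m) \<partial>m) \<longlonglongrightarrow> 0"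
    (is "?I \<longlonglongrightarrow> 0")
proof -
  have "(\<lambda>n. \<rho>t n R / \<rho>t n0 R) \<longlonglongrightarrow> 0 / \<rho>t n0 R"
    by (intro tendsto_divide profile_tendsto_zero R tendsto_const) (use profile_pos[OF R, of n0] in linarith)
  then have "(\<lambda>n. energy m p (\<rho> n0) u * ennreal (\<rho>t n R / \<rho>t n0 R)) \<longlonglongrightarrow> energy m p (\<rho> n0) u * ennreal 0"
    using E by (intro ennreal_tendsto_cmult tendsto_ennrealI) simp_all
  then have "(\<lambda>n. ennreal (\<rho>t n R / \<rho>t n0 R) * energy m p (\<rho> n0) u) \<longlonglongrightarrow> 0"
    by (simp add: mult.commute)
  moreover have "\<forall>\<^sub>F n in sequentially. ?I n \<le> ennreal (\<rho>t n R / \<rho>t n0 R) * energy m p (\<rho> n0) u"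
    using eventually_gt_at_top[of n0] by eventually_elim (rule local_energy_le_energy[OF sets_m sf u _ R])
  ultimately show ?thesis
    by (rule tendsto_sandwich[OF always_eventually[OF allI[OF zero_le]] _ tendsto_const, rotated])
qed

lemma tail_integral_eq_profile:
  assumes "0 < R"
  shows "(\<integral>\<^sup>+y\<in>{y. R \<le> dist x y}. ennreal (\<rho> n x y) \<partial>m)
       = (\<integral>\<^sup>+y\<in>{y. R \<le> dist x y}. ennreal (\<rho>t n (dist x y)) \<partial>m)"
proof (intro nn_integral_cong)
  fix y
  show "ennreal (\<rho> n x y) * indicator {y. R \<le> dist x y} y
      = ennreal (\<rho>t n (dist x y)) * indicator {y. R \<le> dist x y} y"
  proof (cases "R \<le> dist x y")
    case True
    then have "x \<noteq> y" using assms by auto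
    then show ?thesis by (simp add: kernel_eq)
  qed simp
qed

definition tail_bound :: "nat \<Rightarrow> real \<Rightarrow> ennreal" where
  "tail_bound n R = ennreal (\<rho>t n R * V R) + (\<integral>\<^sup>+r\<in>{R..}. ennreal (S r * \<rho>t n r) \<partial>lborel)"

lemma kernel_tail_le:
  fixes m :: "'a measure"
  assumes "sets m = sets borel" "sigma_finite_measure m" "0 < R"
    and "\<And>r. R \<le> r \<Longrightarrow> emeasure m (ball x r) \<le> c * ennreal (V r)"
  shows "(\<integral>\<^sup>+y\<in>{y. R \<le> dist x y}. ennreal (\<rho> n x y) \<partial>m) \<le> c * tail_bound n R"
  unfolding tail_integral_eq_profile[OF assms(3)] tail_bound_def
  using assms by (rule profile_volume.tail_integral_le[OF kernel_profile_volume])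

lemma kernel_tail_ge:
  fixes m :: "'a measure"
  assumes "sets m = sets borel" "sigma_finite_measure m" "0 < R"
    and "\<And>r. R \<le> r \<Longrightarrow> c * ennreal (V r) \<le> emeasure m (ball x r)"
  shows "c * tail_bound n R
       \<le> (\<integral>\<^sup>+y\<in>{y. R \<le> dist x y}. ennreal (\<rho> n x y) \<partial>m) + emeasure m (ball x R) * ennreal (\<rho>t n R)"
  unfolding tail_integral_eq_profile[OF assms(3)] tail_bound_def
  using assms by (rule profile_volume.tail_integral_ge[OF kernel_profile_volume])

lemma S_integral_le_ratio:
  assumes "k < n" and R: "0 < R"
  shows "(\<integral>\<^sup>+r\<in>{R..}. ennreal (S r * \<rho>t k r) \<partial>lborel)
       \<le> ennreal (\<rho>t k R / \<rho>t n R) * (\<integral>\<^sup>+r\<in>{R..}. ennreal (S r * \<rho>t n r) \<partial>lborel)"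
proof -
  let ?c = "\<rho>t k R / \<rho>t n R"
  have "(\<integral>\<^sup>+r\<in>{R..}. ennreal (S r * \<rho>t k r) \<partial>lborel)
      \<le> (\<integral>\<^sup>+r. ennreal ?c * (ennreal (S r * \<rho>t n r) * indicator {R..} r) \<partial>lborel)"
  proof (intro nn_integral_mono)
    fix r :: real
    show "ennreal (S r * \<rho>t k r) * indicator {R..} r
        \<le> ennreal ?c * (ennreal (S r * \<rho>t n r) * indicator {R..} r)"
    proof (cases "R \<le> r")
      case True
      then have r: "0 < r" using R by simp
      have "S r * \<rho>t k r \<le> S r * (?c * \<rho>t n r)"
        using profile_le_ratio_above[OF assms(1) R True] S_nonneg[OF r] by (rule mult_left_mono)
      then have "ennreal (S r * \<rho>t k r) \<le> ennreal (?c * (S r * \<rho>t n r))"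
        by (intro ennreal_leI) (simp add: mult_ac)
      also have "\<dots> = ennreal ?c * ennreal (S r * \<rho>t n r)"
        using profile_pos[OF R, of k] profile_pos[OF R, of n] by (intro ennreal_mult') simp
      finally show ?thesis using True by simp
    qed simp
  qed
  also have "\<dots> = ennreal ?c * (\<integral>\<^sup>+r\<in>{R..}. ennreal (S r * \<rho>t n r) \<partial>lborel)"
    using R by (intro nn_integral_cmult)
      (auto intro!: borel_measurable_continuous_on_times_indicator[where A = "{0<..}"]
        continuous_intros S_cont decreasing_profile.g_cont[OF profile])
  finally show ?thesis .
qed

lemma eventually_good_radius:
  "\<forall>\<^sub>F R in at_top. 0 < R \<and> f R < \<infinity>
     \<and> (\<lambda>n. \<integral>\<^sup>+r\<in>{R..}. ennreal (S r * \<rho>t n r) \<partial>lborel) \<longlonglongrightarrow> f R"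
proof -
  have "\<forall>\<^sub>F R in at_top. f R < \<infinity>"
    using f_tendsto by (rule order_tendstoD) simp
  then show ?thesis
    using S_integral_tendsto eventually_gt_at_top[of 0] by eventually_elim auto
qed

lemma tail_bound_tendsto:
  assumes R: "0 < R" and J: "(\<lambda>n. \<integral>\<^sup>+r\<in>{R..}. ennreal (S r * \<rho>t n r) \<partial>lborel) \<longlonglongrightarrow> f R"
  shows "(\<lambda>n. tail_bound n R) \<longlonglongrightarrow> f R"
proof -
  have "(\<lambda>n. ennreal (\<rho>t n R * V R)) \<longlonglongrightarrow> ennreal (0 * V R)"
    using R by (intro tendsto_ennrealI tendsto_mult profile_tendsto_zero tendsto_const)
  then show ?thesis
    unfolding tail_bound_def using tendsto_add[OF _ J] by fastforce
qed

lemma tail_bound_finite: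
  assumes R: "0 < R" and J: "(\<lambda>n. \<integral>\<^sup>+r\<in>{R..}. ennreal (S r * \<rho>t n r) \<partial>lborel) \<longlonglongrightarrow> f R"
    and "f R < \<infinity>"
  shows "tail_bound n R < \<infinity>"
proof -
  obtain N where N: "\<And>k. N \<le> k \<Longrightarrow> (\<integral>\<^sup>+r\<in>{R..}. ennreal (S r * \<rho>t k r) \<partial>lborel) < \<infinity>"
    using order_tendstoD(2)[OF J \<open>f R < \<infinity>\<close>] by (auto simp: eventually_sequentially)
  have "(\<integral>\<^sup>+r\<in>{R..}. ennreal (S r * \<rho>t n r) \<partial>lborel) < \<infinity>"
  proof (cases "N \<le> n")
    case False
    then have "(\<integral>\<^sup>+r\<in>{R..}. ennreal (S r * \<rho>t n r) \<partial>lborel)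
        \<le> ennreal (\<rho>t n R / \<rho>t N R) * (\<integral>\<^sup>+r\<in>{R..}. ennreal (S r * \<rho>t N r) \<partial>lborel)"
      using R by (intro S_integral_le_ratio) simp_all
    also have "\<dots> < \<infinity>"
      using N[of N] by (simp add: ennreal_mult_less_top less_top)
    finally show ?thesis .
  qed (rule N)
  then show ?thesis by (simp add: tail_bound_def)
qed

lemma tail_integral_uniformly_bounded:
  fixes m :: "'a measure"
  assumes sets_m: "sets m = sets borel" and sf: "sigma_finite_measure m"
    and growth: "\<forall>x. \<forall>r\<ge>R0. emeasure m (ball x r) \<le> ennreal (k * V r)"
  shows "\<exists>R1. \<forall>R\<ge>R1. \<exists>C::real. \<forall>x n. (\<integral>\<^sup>+y\<in>{y. R \<le> dist x y}. ennreal (\<rho> n x y) \<partial>m) \<le> ennreal C"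
proof -
  obtain R1 where R1: "\<And>R. R1 \<le> R \<Longrightarrow> (0 < R \<and> f R < \<infinity>
      \<and> (\<lambda>n. \<integral>\<^sup>+r\<in>{R..}. ennreal (S r * \<rho>t n r) \<partial>lborel) \<longlonglongrightarrow> f R) \<and> R0 \<le> R"
    using eventually_conj[OF eventually_good_radius eventually_ge_at_top[of R0]]
    by (auto simp: eventually_at_top_linorder)
  have "\<exists>C::real. \<forall>x n. (\<integral>\<^sup>+y\<in>{y. R \<le> dist x y}. ennreal (\<rho> n x y) \<partial>m) \<le> ennreal C"
    if "R1 \<le> R" for R
  proof -
    from R1[OF that] have R: "0 < R" "f R < \<infinity>" "R0 \<le> R"
      and J: "(\<lambda>n. \<integral>\<^sup>+r\<in>{R..}. ennreal (S r * \<rho>t n r) \<partial>lborel) \<longlonglongrightarrow> f R"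
      by auto
    obtain B where B: "B < \<infinity>" "\<And>n. tail_bound n R \<le> B"
      using ennreal_seq_bounded_if_tendsto[OF tail_bound_finite[OF R(1) J R(2)]
          tail_bound_tendsto[OF R(1) J] R(2)] by blast
    have "(\<integral>\<^sup>+y\<in>{y. R \<le> dist x y}. ennreal (\<rho> n x y) \<partial>m) \<le> ennreal k * B" for x n
    proof -
      have "(\<integral>\<^sup>+y\<in>{y. R \<le> dist x y}. ennreal (\<rho> n x y) \<partial>m) \<le> ennreal k * tail_bound n R"
      proof (rule kernel_tail_le[OF sets_m sf R(1)])
        fix r assume "R \<le> r"
        then have "emeasure m (ball x r) \<le> ennreal (k * V r)"
          using growth R(3) by auto
        then show "emeasure m (ball x r) \<le> ennreal k * ennreal (V r)"
          using \<open>R \<le> r\<close> R(1) V_pos[of r] by (simp add: ennreal_mult'')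
      qed
      also have "\<dots> \<le> ennreal k * B"
        using B(2) by (rule mult_left_mono) simp
      finally show ?thesis .
    qed
    moreover have "ennreal k * B = ennreal (enn2real (ennreal k * B))"
      using B(1) by (simp add: ennreal_mult_less_top less_top)
    ultimately show ?thesis by metis
  qed
  then show ?thesis by blast
qed

lemma kernel_tail_limsup_le:
  fixes m :: "'a measure"
  assumes sets_m: "sets m = sets borel" and sf: "sigma_finite_measure m" and R: "0 < R"
    and J: "(\<lambda>n. \<integral>\<^sup>+r\<in>{R..}. ennreal (S r * \<rho>t n r) \<partial>lborel) \<longlonglongrightarrow> f R"
    and "c < \<infinity>" and growth: "\<And>r. R \<le> r \<Longrightarrow> emeasure m (ball x r) \<le> c * ennreal (V r)"
  shows "limsup (\<lambda>n. \<integral>\<^sup>+y\<in>{y. R \<le> dist x y}. ennreal (\<rho> n x y) \<partial>m) \<le> c * f R"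
proof -
  have "limsup (\<lambda>n. \<integral>\<^sup>+y\<in>{y. R \<le> dist x y}. ennreal (\<rho> n x y) \<partial>m) \<le> limsup (\<lambda>n. c * tail_bound n R)"
    using kernel_tail_le[OF sets_m sf R growth] by (intro Limsup_mono always_eventually) blast
  also have "\<dots> = c * f R"
    using \<open>c < \<infinity>\<close> by (intro lim_imp_Limsup ennreal_tendsto_cmult tail_bound_tendsto R J) simp_all
  finally show ?thesis .
qed

lemma kernel_tail_liminf_ge:
  fixes m :: "'a measure"
  assumes sets_m: "sets m = sets borel" and sf: "sigma_finite_measure m" and R: "0 < R"
    and J: "(\<lambda>n. \<integral>\<^sup>+r\<in>{R..}. ennreal (S r * \<rho>t n r) \<partial>lborel) \<longlonglongrightarrow> f R"
    and "f R < \<infinity>" "c < \<infinity>" "emeasure m (ball x R) < \<infinity>"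
    and growth: "\<And>r. R \<le> r \<Longrightarrow> c * ennreal (V r) \<le> emeasure m (ball x r)"
  shows "c * f R \<le> liminf (\<lambda>n. \<integral>\<^sup>+y\<in>{y. R \<le> dist x y}. ennreal (\<rho> n x y) \<partial>m)"
proof -
  let ?G = "emeasure m (ball x R)"
  have "(\<lambda>n. ennreal (\<rho>t n R)) \<longlonglongrightarrow> ennreal 0"
    using R by (intro tendsto_ennrealI profile_tendsto_zero)
  then have "(\<lambda>n. ?G * ennreal (\<rho>t n R)) \<longlonglongrightarrow> ?G * ennreal 0"
    using \<open>?G < \<infinity>\<close> by (intro ennreal_tendsto_cmult) simp_all
  moreover have "(\<lambda>n. c * tail_bound n R) \<longlonglongrightarrow> c * f R"
    using \<open>c < \<infinity>\<close> by (intro ennreal_tendsto_cmult tail_bound_tendsto R J) simp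
  ultimately have "(\<lambda>n. c * tail_bound n R - ?G * ennreal (\<rho>t n R)) \<longlonglongrightarrow> c * f R - ?G * ennreal 0"
    using assms(5,6) by (intro tendsto_diff_ennreal) (auto simp: ennreal_mult_eq_top_iff)
  then have "c * f R = liminf (\<lambda>n. c * tail_bound n R - ?G * ennreal (\<rho>t n R))"
    by (intro lim_imp_Liminf[symmetric]) simp_all
  also have "\<dots> \<le> liminf (\<lambda>n. \<integral>\<^sup>+y\<in>{y. R \<le> dist x y}. ennreal (\<rho> n x y) \<partial>m)"
  proof (intro Liminf_mono always_eventually allI)
    fix n
    have "?G * ennreal (\<rho>t n R) \<noteq> \<infinity>"
      using assms(7) by (simp add: ennreal_mult_eq_top_iff)
    then show "c * tail_bound n R - ?G * ennreal (\<rho>t n R) \<le> (\<integral>\<^sup>+y\<in>{y. R \<le> dist x y}. ennreal (\<rho> n x y) \<partial>m)"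
      using kernel_tail_ge[OF sets_m sf R growth, of n] by (simp add: ennreal_minus_le_iff add.commute)
  qed
  finally show ?thesis .
qed

definition volume_ratio :: "'a measure \<Rightarrow> 'a \<Rightarrow> real \<Rightarrow> ennreal" where
  "volume_ratio m x r = emeasure m (ball x r) / ennreal (V r)"

lemma emeasure_ball_eq_volume_ratio:
  "0 < r \<Longrightarrow> emeasure m (ball x r) = volume_ratio m x r * ennreal (V r)"
  using V_pos[of r] by (simp add: volume_ratio_def ennreal_divide_times divide_eq_1_ennreal)

lemma volume_ratio_le:
  assumes growth: "\<forall>x. \<forall>r\<ge>R0. emeasure m (ball x r) \<le> ennreal (k * V r)" and r: "R0 \<le> r" "0 < r"
  shows "volume_ratio m x r \<le> ennreal k"
proof -
  have "ennreal (V r) * volume_ratio m x r = emeasure m (ball x r)"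
    using emeasure_ball_eq_volume_ratio[OF r(2)] by (simp add: mult.commute)
  also have "\<dots> \<le> ennreal (k * V r)"
    using growth r(1) by blast
  also have "\<dots> = ennreal (V r) * ennreal k"
    using less_imp_le[OF V_pos[OF r(2)]] by (simp add: ennreal_mult'' mult.commute)
  finally show ?thesis
    using V_pos[OF r(2)] by (subst (asm) ennreal_mult_le_mult_iff) auto
qed

lemma eventually_tail_integral_between_volume_ratios:
  fixes m :: "'a measure"
  assumes sets_m: "sets m = sets borel" and sf: "sigma_finite_measure m"
    and growth: "\<forall>x. \<forall>r\<ge>R0. emeasure m (ball x r) \<le> ennreal (k * V r)"
  shows "\<forall>\<^sub>F R in at_top.
      (INF r\<in>{R..}. volume_ratio m x r) * f R
        \<le> liminf (\<lambda>n. \<integral>\<^sup>+y\<in>{y. R \<le> dist x y}. ennreal (\<rho> n x y) \<partial>m)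
    \<and> limsup (\<lambda>n. \<integral>\<^sup>+y\<in>{y. R \<le> dist x y}. ennreal (\<rho> n x y) \<partial>m)
        \<le> (SUP r\<in>{R..}. volume_ratio m x r) * f R"
  using eventually_good_radius eventually_ge_at_top[of R0]
proof eventually_elim
  case (elim R)
  then have R: "0 < R" "f R < \<infinity>" "R0 \<le> R"
    and J: "(\<lambda>n. \<integral>\<^sup>+r\<in>{R..}. ennreal (S r * \<rho>t n r) \<partial>lborel) \<longlonglongrightarrow> f R"
    by auto
  have sup_fin: "(SUP r\<in>{R..}. volume_ratio m x r) < \<infinity>"
    using R volume_ratio_le[OF growth] by (intro le_less_trans[OF SUP_least[of _ _ "ennreal k"]]) auto
  then have inf_fin: "(INF r\<in>{R..}. volume_ratio m x r) < \<infinity>"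
    by (rule le_less_trans[rotated]) (rule INF_le_SUP, auto)
  have "emeasure m (ball x R) \<le> ennreal (k * V R)"
    using growth R(3) by blast
  then have ball_fin: "emeasure m (ball x R) < \<infinity>"
    by (simp add: le_less_trans[OF _ ennreal_less_top])
  have "limsup (\<lambda>n. \<integral>\<^sup>+y\<in>{y. R \<le> dist x y}. ennreal (\<rho> n x y) \<partial>m)
      \<le> (SUP r\<in>{R..}. volume_ratio m x r) * f R"
    by (rule kernel_tail_limsup_le[OF sets_m sf R(1) J sup_fin])
      (use R(1) in \<open>simp add: emeasure_ball_eq_volume_ratio SUP_upper mult_right_mono\<close>)
  moreover have "(INF r\<in>{R..}. volume_ratio m x r) * f R
      \<le> liminf (\<lambda>n. \<integral>\<^sup>+y\<in>{y. R \<le> dist x y}. ennreal (\<rho> n x y) \<partial>m)"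
    by (rule kernel_tail_liminf_ge[OF sets_m sf R(1) J R(2) inf_fin ball_fin])
      (use R(1) in \<open>simp add: emeasure_ball_eq_volume_ratio INF_lower mult_right_mono\<close>)
  ultimately show ?case by blast
qed

lemma tail_integral_tendsto_AVR:
  fixes m :: "'a measure"
  assumes sets_m: "sets m = sets borel" and sf: "sigma_finite_measure m"
    and growth: "\<forall>x. \<forall>r\<ge>R0. emeasure m (ball x r) \<le> ennreal (k * V r)"
    and AVR: "has_AVR m V L"
  shows "((\<lambda>R. limsup (\<lambda>n. \<integral>\<^sup>+y\<in>{y. R \<le> dist x y}. ennreal (\<rho> n x y) \<partial>m)) \<longlongrightarrow> L) at_top
    \<and> ((\<lambda>R. liminf (\<lambda>n. \<integral>\<^sup>+y\<in>{y. R \<le> dist x y}. ennreal (\<rho> n x y) \<partial>m)) \<longlongrightarrow> L) at_top"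
proof -
  have ratio: "(volume_ratio m x \<longlongrightarrow> L) at_top"
    using AVR unfolding has_AVR_def volume_ratio_def[abs_def] by blast
  have "((\<lambda>R. (INF r\<in>{R..}. volume_ratio m x r) * f R) \<longlongrightarrow> L) at_top"
    using tendsto_mult_ennreal[OF tendsto_INF_atLeast_at_top[OF ratio] f_tendsto] by simp
  moreover have "((\<lambda>R. (SUP r\<in>{R..}. volume_ratio m x r) * f R) \<longlongrightarrow> L) at_top"
    using tendsto_mult_ennreal[OF tendsto_SUP_atLeast_at_top[OF ratio] f_tendsto] by simp
  ultimately show ?thesis
    using eventually_tail_integral_between_volume_ratios[OF sets_m sf growth]
    by (intro limsup_liminf_tendsto_sandwich)
qed

end

lemma (in volume_function) approx_id_radialE:
  assumes "approx_id_radial V S \<rho>" and V_lim: "filterlim V at_top at_top"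
  obtains \<rho>t D f where "radial_approx_identity V S \<rho> \<rho>t D f"
proof -
  obtain \<rho>t :: "nat \<Rightarrow> real \<Rightarrow> real" where
    H: "(\<forall>n. \<rho>t n C1_differentiable_on {0<..} \<and> strict_antimono_on {0<..} (\<rho>t n))
      \<and> (\<forall>r>0. (\<lambda>n. \<rho>t n r) \<longlonglongrightarrow> 0)
      \<and> (\<forall>n. ((\<lambda>r. \<rho>t n r * V r) \<longlongrightarrow> 0) at_top)
      \<and> (\<forall>n x y. x \<noteq> y \<longrightarrow> \<rho> n x y = \<rho>t n (dist x y))
      \<and> (\<forall>n k. n > k \<longrightarrow> mono_on {0<..} (\<lambda>r. \<rho>t n r / \<rho>t k r))
      \<and> (\<exists>f :: real \<Rightarrow> ennreal.
           (\<forall>\<^sub>F R in at_top. (\<lambda>n. \<integral>\<^sup>+ r\<in>{R..}. ennreal (S r * \<rho>t n r) \<partial>lborel) \<longlonglongrightarrow> f R)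
           \<and> (f \<longlongrightarrow> 1) at_top)"
    using assms(1) unfolding approx_id_radial_def by (rule exE)
  then obtain f :: "real \<Rightarrow> ennreal" where
    J: "\<forall>\<^sub>F R in at_top. (\<lambda>n. \<integral>\<^sup>+r\<in>{R..}. ennreal (S r * \<rho>t n r) \<partial>lborel) \<longlonglongrightarrow> f R"
    and f1: "(f \<longlongrightarrow> 1) at_top"
    by (elim conjE exE)
  have C1: "\<And>n. \<rho>t n C1_differentiable_on {0<..}"
    and anti: "\<And>n. strict_antimono_on {0<..} (\<rho>t n)"
    and tendsto_n: "\<And>r. 0 < r \<Longrightarrow> (\<lambda>n. \<rho>t n r) \<longlonglongrightarrow> 0"
    and tendsto_V: "\<And>n. ((\<lambda>r. \<rho>t n r * V r) \<longlongrightarrow> 0) at_top"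
    and kernel: "\<And>n x y. x \<noteq> y \<Longrightarrow> \<rho> n x y = \<rho>t n (dist x y)"
    and ratio: "\<And>n k. k < n \<Longrightarrow> mono_on {0<..} (\<lambda>r. \<rho>t n r / \<rho>t k r)"
    using H by simp_all
  have tendsto_zero: "(\<rho>t n \<longlongrightarrow> 0) at_top" for n
    using tendsto_V V_lim by (rule tendsto_zero_if_mult_tendsto_zero)
  have "\<forall>n. \<exists>D. decreasing_profile (\<rho>t n) D"
    using decreasing_profileI[OF C1 anti tendsto_zero] by blast
  then obtain D where profile: "\<forall>n. decreasing_profile (\<rho>t n) (D n)"
    by (rule choice[THEN exE])
  have "radial_approx_identity V S \<rho> \<rho>t D f"
  proof (intro radial_approx_identity.intro radial_approx_identity_axioms.intro volume_function_axioms)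
    show "0 < \<rho>t n r" if "0 < r" for n r
      using anti tendsto_zero that by (rule strict_antimono_on_pos_if_tendsto_zero)
  qed (use profile tendsto_n kernel ratio J f1 in simp_all)
  then show ?thesis by (rule that)
qed

theorem mainTheorem2:
  fixes V S :: "real \<Rightarrow> real"
    and m :: "('a::polish_space) measure"
    and \<rho> :: "nat \<Rightarrow> 'a \<Rightarrow> 'a \<Rightarrow> real"
    and L :: ennreal and p :: real
  assumes V_nonneg: "\<forall>t\<ge>0. V t \<ge> 0"
    and V_deriv: "\<forall>t\<ge>0. (V has_real_derivative S t) (at t within {0..})"
    and S_cont: "continuous_on {0..} S"
    and V_strict: "strict_mono_on {0..} V"
    and V_lim: "filterlim V at_top at_top"
    and mms: "mms m"
    and AVR: "has_AVR m V L"
    and growth: "\<exists>k>0. \<exists>R0. \<forall>x. \<forall>r\<ge>R0. emeasure m (ball x r) \<le> ennreal (k * V r)"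
    and approx: "approx_id_radial V S \<rho>"
    and p: "p \<ge> 1"
  shows
    "(\<forall>n x y. x \<noteq> y \<longrightarrow> \<rho> n x y \<ge> 0)
     \<and> (\<forall>n x y. x \<noteq> y \<longrightarrow> \<rho> n x y = \<rho> n y x)
     \<and> (\<forall>n. (\<lambda>(x, y). if x \<noteq> y then \<rho> n x y else 0) \<in> borel_measurable (m \<Otimes>\<^sub>M m))
     \<and> (\<forall>x.
          ((\<lambda>R. limsup (\<lambda>n. \<integral>\<^sup>+ y\<in>{y. dist x y \<ge> R}. ennreal (\<rho> n x y) \<partial>m)) \<longlongrightarrow> L) at_top
        \<and> ((\<lambda>R. liminf (\<lambda>n. \<integral>\<^sup>+ y\<in>{y. dist x y \<ge> R}. ennreal (\<rho> n x y) \<partial>m)) \<longlongrightarrow> L) at_top)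
     \<and> (\<forall>u :: 'a \<Rightarrow> real. u \<in> borel_measurable m
          \<longrightarrow> (\<integral>\<^sup>+ x. ennreal (\<bar>u x\<bar> powr p) \<partial>m) < \<infinity>
          \<longrightarrow> (\<exists>n0. energy m p (\<rho> n0) u < \<infinity>)
          \<longrightarrow> (\<forall>R>0. (\<lambda>n. \<integral>\<^sup>+ x. (\<integral>\<^sup>+ y\<in>{y. 0 < dist x y \<and> dist x y < R}.
                   ennreal (\<bar>u x - u y\<bar> powr p * \<rho> n x y) \<partial>m) \<partial>m) \<longlonglongrightarrow> 0))
     \<and> (\<exists>R0. \<forall>R\<ge>R0. \<exists>C::real. \<forall>x n.
          (\<integral>\<^sup>+ y\<in>{y. dist x y \<ge> R}. ennreal (\<rho> n x y) \<partial>m) \<le> ennreal C)"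
proof -
  interpret volume_function V S
    using V_nonneg V_deriv S_cont V_strict by (rule volume_functionI)
  obtain \<rho>t D f where "radial_approx_identity V S \<rho> \<rho>t D f"
    using approx V_lim by (rule approx_id_radialE)
  then interpret radial_approx_identity V S \<rho> \<rho>t D f .
  obtain k R0 where growth': "\<forall>x. \<forall>r\<ge>R0. emeasure m (ball x r) \<le> ennreal (k * V r)"
    using growth by blast
  have sets_m: "sets m = sets borel"
    using mms by (simp add: mms_def)
  have sf: "sigma_finite_measure m"
  proof (rule sigma_finite_measure_if_balls_finite[where x = undefined and R = R0, OF sets_m])
    fix r assume "R0 \<le> r"
    then have "emeasure m (ball undefined r) \<le> ennreal (k * V r)"
      using growth' by blast
    then show "emeasure m (ball undefined r) < \<infinity>"
      by (simp add: le_less_trans[OF _ ennreal_less_top])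
  qed
  show ?thesis
  proof (intro conjI allI impI)
    fix u :: "'a \<Rightarrow> real" and R :: real
    assume "u \<in> borel_measurable m" "\<exists>n0. energy m p (\<rho> n0) u < \<infinity>" "0 < R"
    then show "(\<lambda>n. \<integral>\<^sup>+ x. (\<integral>\<^sup>+ y\<in>{y. 0 < dist x y \<and> dist x y < R}.
        ennreal (\<bar>u x - u y\<bar> powr p * \<rho> n x y) \<partial>m) \<partial>m) \<longlonglongrightarrow> 0"
      using local_energy_tendsto_zero[OF sets_m sf] by blast
  qed (use kernel_nonneg kernel_symmetric kernel_measurable[OF sets_m]
      tail_integral_tendsto_AVR[OF sets_m sf growth' AVR]
      tail_integral_uniformly_bounded[OF sets_m sf growth'] in simp_all)
qed

end
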